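(* Let $n\ge 1$ and $k\ge 1$ be natural numbers and let $$\phi_k \;=\; \Box \bigvee_{i=1}^k \Big(p_i\wedge \bigwedge_{j\neq i} \neg p_j\Big) \;\to\; \lozenge \bigvee_{i=1}^k (p_i\wedge \lozenge p_i).$$ Then $\phi_k$ is valid in the frame $(\mathbb{R}^n,R_{=1})$ if and only if $k<\chi(S^n)$.
   Context: Modal formulas are built from propositional variables using $\bot$, $\to$ and one unary modality $\lozenge$, with $\Box=\neg\lozenge\neg$. In the frame $(\mathbb{R}^n,R_{=1})$, $xR_{=1}y$ iff $\|x-y\|=1$ (Euclidean norm); $x\models\lozenge\varphi$ iff some $y$ with $xR_{=1}y$ satisfies $\varphi$; a formula is valid if it is true at every point under every valuation (assignment of subsets of $\mathbb{R}^n$ to variables). $S^n$ denotes the unit sphere $\{x\in\mathbb{R}^n:\|x\|=1\}$ of $\mathbb{R}^n$, regarded as a graph in which two points are adjacent iff their distance is exactly $1$, and $\chi(S^n)$ is its chromatic number (which is finite). *)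

theory Defs
  imports "HOL-Analysis.Analysis"
begin

datatype fm = Var nat | Bot | Imp fm fm | Dia fm

definition Neg :: "fm \<Rightarrow> fm" where "Neg a = Imp a Bot"
definition Top :: fm where "Top = Neg Bot"
definition Box :: "fm \<Rightarrow> fm" where "Box a = Neg (Dia (Neg a))"
definition Or :: "fm \<Rightarrow> fm \<Rightarrow> fm" where "Or a b = Imp (Neg a) b"
definition And :: "fm \<Rightarrow> fm \<Rightarrow> fm" where "And a b = Neg (Imp a (Neg b))"

definition Disj :: "fm list \<Rightarrow> fm" where "Disj xs = foldr Or xs Bot"
definition Conj :: "fm list \<Rightarrow> fm" where "Conj xs = foldr And xs Top"

definition R1 :: "'a::euclidean_space \<Rightarrow> 'a \<Rightarrow> bool" where
  "R1 x y \<longleftrightarrow> norm (x - y) = 1"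

fun sem :: "(nat \<Rightarrow> 'a::euclidean_space set) \<Rightarrow> 'a \<Rightarrow> fm \<Rightarrow> bool" where
  "sem V x (Var p) = (x \<in> V p)"
| "sem V x Bot = False"
| "sem V x (Imp a b) = (sem V x a \<longrightarrow> sem V x b)"
| "sem V x (Dia a) = (\<exists>y. R1 x y \<and> sem V y a)"

definition valid_R1 :: "'a::euclidean_space itself \<Rightarrow> fm \<Rightarrow> bool" where
  "valid_R1 _ f \<longleftrightarrow> (\<forall>(V :: nat \<Rightarrow> 'a set) x. sem V x f)"

definition phi :: "nat \<Rightarrow> fm" where
  "phi k = Imp
     (Box (Disj (map (\<lambda>i. And (Var i) (Conj (map (\<lambda>j. Neg (Var j)) (filter (\<lambda>j. j \<noteq> i) [1..<k+1]))))
                     [1..<k+1])))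
     (Dia (Disj (map (\<lambda>i. And (Var i) (Dia (Var i))) [1..<k+1])))"

definition colorable :: "'a set \<Rightarrow> ('a \<Rightarrow> 'a \<Rightarrow> bool) \<Rightarrow> nat \<Rightarrow> bool" where
  "colorable S E m \<longleftrightarrow>
     (\<exists>c. (\<forall>x\<in>S. c x < m) \<and> (\<forall>x\<in>S. \<forall>y\<in>S. E x y \<longrightarrow> c x \<noteq> c y))"

definition chromatic_number :: "'a set \<Rightarrow> ('a \<Rightarrow> 'a \<Rightarrow> bool) \<Rightarrow> nat" where
  "chromatic_number S E = (LEAST m. colorable S E m)"

end

theory Submission
  imports Defs
begin

text \<open>
  A valuation refuting \<open>phi k\<close> at a point x gives every point of the unit sphere around x
  exactly one of the labels 1, ..., k, and no two points of that sphere at distance 1 share a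
  label: it is a k-colouring of the unit-distance graph on the sphere, translated to x.
  Conversely, a k-colouring of the sphere read as a valuation refutes \<open>phi k\<close> at the centre.
  So \<open>phi k\<close> is valid iff the sphere is not k-colourable, i.e. iff k is below its chromatic
  number. That number exists because space is finitely colourable: colour a cubical grid of
  mesh 1/n periodically with period n + 1 in each coordinate.
\<close>

lemma sem_Neg [simp]: "sem V x (Neg a) \<longleftrightarrow> \<not> sem V x a"
  by (simp add: Neg_def)

lemma sem_Box [simp]: "sem V x (Box a) \<longleftrightarrow> (\<forall>y. R1 x y \<longrightarrow> sem V y a)"
  by (simp add: Box_def)

lemma sem_And [simp]: "sem V x (And a b) \<longleftrightarrow> sem V x a \<and> sem V x b"
  by (simp add: And_def)

lemma sem_Disj [simp]: "sem V x (Disj fs) \<longleftrightarrow> (\<exists>f\<in>set fs. sem V x f)"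
  by (induction fs) (auto simp: Disj_def Or_def)

lemma sem_Conj [simp]: "sem V x (Conj fs) \<longleftrightarrow> (\<forall>f\<in>set fs. sem V x f)"
  by (induction fs) (auto simp: Conj_def Top_def)

lemma sem_phi:
  "sem V x (phi k) \<longleftrightarrow>
    (\<forall>y. R1 x y \<longrightarrow> (\<exists>!i. i \<in> {1..k} \<and> y \<in> V i)) \<longrightarrow>
    (\<exists>y z i. R1 x y \<and> R1 y z \<and> i \<in> {1..k} \<and> y \<in> V i \<and> z \<in> V i)"
proof -
  have indices: "set [1..<k+1] = {1..k}"
    by auto
  have box: "sem V y (Disj (map (\<lambda>i. And (Var i) (Conj (map (\<lambda>j. Neg (Var j))
          (filter (\<lambda>j. j \<noteq> i) [1..<k+1])))) [1..<k+1]))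
        \<longleftrightarrow> (\<exists>!i. i \<in> {1..k} \<and> y \<in> V i)" for y
    by (simp only: sem_Disj sem_Conj sem_And sem_Neg sem.simps set_map set_filter indices
        bex_simps ball_simps) blast
  have dia: "sem V y (Disj (map (\<lambda>i. And (Var i) (Dia (Var i))) [1..<k+1]))
        \<longleftrightarrow> (\<exists>z i. R1 y z \<and> i \<in> {1..k} \<and> y \<in> V i \<and> z \<in> V i)" for y
    by (simp only: sem_Disj sem_And sem.simps set_map indices bex_simps) blast
  show ?thesis
    unfolding phi_def sem.simps(3,4) sem_Box box dia by auto
qed

lemma sphere_colorable_if_not_sem_phi:
  fixes x :: "'a::euclidean_space"
  assumes "\<not> sem V x (phi k)"
  shows "colorable (sphere (0::'a) 1) (\<lambda>y z. dist y z = 1) k"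
proof -
  have refuted: "(\<forall>y. R1 x y \<longrightarrow> (\<exists>!i. i \<in> {1..k} \<and> y \<in> V i)) \<and>
      \<not> (\<exists>y z i. R1 x y \<and> R1 y z \<and> i \<in> {1..k} \<and> y \<in> V i \<and> z \<in> V i)"
    using assms unfolding sem_phi not_imp .
  define c where "c y = (THE i. i \<in> {1..k} \<and> x + y \<in> V i) - 1" for y
  have c: "c y < k \<and> x + y \<in> V (c y + 1)" if "y \<in> sphere 0 1" for y
  proof -
    define i where "i = (THE i. i \<in> {1..k} \<and> x + y \<in> V i)"
    have "R1 x (x + y)"
      using that by (simp add: R1_def)
    then have "i \<in> {1..k} \<and> x + y \<in> V i"
      unfolding i_def by (rule theI'[OF conjunct1[OF refuted, rule_format]])
    moreover have "c y = i - 1"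
      by (simp add: c_def i_def)
    ultimately show ?thesis
      by auto
  qed
  show ?thesis
    unfolding colorable_def
  proof (intro exI[of _ c] conjI ballI impI notI)
    show "c y < k" if "y \<in> sphere 0 1" for y
      using c[OF that] ..
    show False if "y \<in> sphere 0 1" "z \<in> sphere 0 1" "dist y z = 1" "c y = c z" for y z
    proof -
      have "R1 x (x + y)" "R1 (x + y) (x + z)"
        using that(1,3) by (simp_all add: R1_def dist_norm)
      moreover have "c y + 1 \<in> {1..k}" "x + y \<in> V (c y + 1)" "x + z \<in> V (c y + 1)"
        using c[OF that(1)] c[OF that(2)] that(4) by auto
      ultimately show False
        using conjunct2[OF refuted] by blast
    qed
  qed
qed

lemma not_sem_phi_if_sphere_colorable:
  assumes "colorable (sphere (0::'a::euclidean_space) 1) (\<lambda>y z. dist y z = 1) k"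
  shows "\<exists>V. \<not> sem V (0::'a) (phi k)"
proof -
  obtain c :: "'a \<Rightarrow> nat" where c_less: "\<And>y. y \<in> sphere 0 1 \<Longrightarrow> c y < k"
    and c_proper: "\<And>y z. y \<in> sphere 0 1 \<Longrightarrow> z \<in> sphere 0 1 \<Longrightarrow> dist y z = 1 \<Longrightarrow> c y \<noteq> c z"
    using assms unfolding colorable_def by blast
  define V where "V i = {y \<in> sphere 0 1. c y + 1 = i}" for i
  have "\<exists>!i. i \<in> {1..k} \<and> y \<in> V i" if "R1 0 y" for y
    using that c_less[of y] by (auto simp: R1_def V_def)
  moreover have "\<not> (R1 0 y \<and> R1 y z \<and> y \<in> V i \<and> z \<in> V i)" for y z i
    using c_proper[of y z] by (auto simp: R1_def V_def dist_norm)
  ultimately have "\<not> sem V 0 (phi k)"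
    unfolding sem_phi by blast
  then show ?thesis
    by (rule exI[of _ V])
qed

lemma valid_phi_iff_sphere_not_colorable:
  "valid_R1 TYPE('a::euclidean_space) (phi k) \<longleftrightarrow>
    \<not> colorable (sphere (0::'a) 1) (\<lambda>y z. dist y z = 1) k"
proof
  assume "valid_R1 TYPE('a) (phi k)"
  then show "\<not> colorable (sphere (0::'a) 1) (\<lambda>y z. dist y z = 1) k"
    unfolding valid_R1_def using not_sem_phi_if_sphere_colorable by blast
next
  assume "\<not> colorable (sphere (0::'a) 1) (\<lambda>y z. dist y z = 1) k"
  then show "valid_R1 TYPE('a) (phi k)"
    unfolding valid_R1_def using sphere_colorable_if_not_sem_phi by blast
qed

lemma colorable_mono:
  assumes "colorable S E m" and "m \<le> m'"
  shows "colorable S E m'"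
proof -
  obtain c where "\<forall>x\<in>S. c x < m" and "\<forall>x\<in>S. \<forall>y\<in>S. E x y \<longrightarrow> c x \<noteq> c y"
    using assms(1) unfolding colorable_def by blast
  then show ?thesis
    unfolding colorable_def using assms(2) by (auto intro!: exI[of _ c])
qed

lemma less_chromatic_number_iff:
  assumes "colorable S E m"
  shows "k < chromatic_number S E \<longleftrightarrow> \<not> colorable S E k"
proof
  assume "k < chromatic_number S E"
  then show "\<not> colorable S E k"
    unfolding chromatic_number_def by (rule not_less_Least)
next
  assume "\<not> colorable S E k"
  moreover have "colorable S E (chromatic_number S E)"
    unfolding chromatic_number_def using assms by (rule LeastI)
  ultimately show "k < chromatic_number S E"
    using colorable_mono by (meson not_less)
qed

lemma colorable_cardI:
  assumes "finite F"
    and "\<And>x. x \<in> S \<Longrightarrow> c x \<in> F"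
    and "\<And>x y. x \<in> S \<Longrightarrow> y \<in> S \<Longrightarrow> E x y \<Longrightarrow> c x \<noteq> c y"
  shows "colorable S E (card F)"
proof -
  obtain h where h: "bij_betw h F {0..<card F}"
    using ex_bij_betw_finite_nat[OF assms(1)] by blast
  show ?thesis
    unfolding colorable_def
  proof (intro exI[of _ "h \<circ> c"] conjI ballI impI)
    show "(h \<circ> c) x < card F" if "x \<in> S" for x
      using h assms(2)[OF that] by (auto simp: bij_betw_def)
    show "(h \<circ> c) x \<noteq> (h \<circ> c) y" if "x \<in> S" "y \<in> S" "E x y" for x y
      using h assms(2)[OF that(1)] assms(2)[OF that(2)] assms(3)[OF that]
      by (auto simp: bij_betw_def inj_on_def)
  qed
qed

lemma floor_divide_mod_eq_cases:
  fixes a b s :: real and N :: int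
  assumes "s > 0" and "\<lfloor>a / s\<rfloor> mod N = \<lfloor>b / s\<rfloor> mod N"
  shows "\<bar>a - b\<bar> < s \<or> (N - 1) * s < \<bar>a - b\<bar>"
proof -
  have scaled: "\<bar>a / s - b / s\<bar> = \<bar>a - b\<bar> / s"
    using assms(1) by (simp add: diff_divide_distrib[symmetric])
  have floors: "\<lfloor>a / s\<rfloor> \<le> a / s" "a / s < \<lfloor>a / s\<rfloor> + 1"
    "\<lfloor>b / s\<rfloor> \<le> b / s" "b / s < \<lfloor>b / s\<rfloor> + 1"
    by linarith+
  show ?thesis
  proof (cases "\<lfloor>a / s\<rfloor> = \<lfloor>b / s\<rfloor>")
    case True
    then have "\<bar>a - b\<bar> / s < 1"
      using floors unfolding scaled[symmetric] by linarith
    then show ?thesis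
      using assms(1) by (simp add: divide_less_eq)
  next
    case False
    have "N dvd \<lfloor>a / s\<rfloor> - \<lfloor>b / s\<rfloor>"
      using assms(2) by (simp add: mod_eq_dvd_iff)
    then have "\<bar>N\<bar> \<le> \<bar>\<lfloor>a / s\<rfloor> - \<lfloor>b / s\<rfloor>\<bar>"
      using False by (simp add: dvd_imp_le_int)
    then have "real_of_int N - 1 < \<bar>a - b\<bar> / s"
      using floors unfolding scaled[symmetric] by linarith
    then show ?thesis
      using assms(1) by (simp add: less_divide_eq)
  qed
qed

lemma unit_distance_colorable:
  fixes S :: "'a::euclidean_space set"
  shows "colorable S (\<lambda>x y. dist x y = 1) ((DIM('a) + 1) ^ DIM('a))"
proof -
  define n where "n = DIM('a)"
  define s :: real where "s = 1 / n"
  define N :: int where "N = int (n + 1)"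
  define F where "F = (\<Pi>\<^sub>E b\<in>(Basis::'a set). {0..<N})"
  define c where "c x = (\<lambda>b\<in>Basis. \<lfloor>(x \<bullet> b) / s\<rfloor> mod N)" for x :: 'a
  have "n > 0"
    by (simp add: n_def)
  then have "s > 0" and "N > 0" and period: "(N - 1) * s = 1"
    by (simp_all add: s_def N_def)
  have "c x \<noteq> c y" if "dist x y = 1" for x y
  proof
    assume "c x = c y"
    have coordinate_small: "\<bar>(x - y) \<bullet> b\<bar> < s" if "b \<in> Basis" for b
    proof -
      have same_residue: "\<lfloor>(x \<bullet> b) / s\<rfloor> mod N = \<lfloor>(y \<bullet> b) / s\<rfloor> mod N"
        using arg_cong[OF \<open>c x = c y\<close>, of "\<lambda>f. f b"] that by (simp add: c_def)
      have "\<bar>x \<bullet> b - y \<bullet> b\<bar> < s \<or> 1 < \<bar>x \<bullet> b - y \<bullet> b\<bar>"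
        using floor_divide_mod_eq_cases[OF \<open>s > 0\<close> same_residue] by (simp only: period)
      moreover have "\<bar>(x - y) \<bullet> b\<bar> \<le> 1"
        using Basis_le_norm[OF that, of "x - y"] \<open>dist x y = 1\<close> by (simp add: dist_norm)
      ultimately show ?thesis
        by (simp add: inner_diff_left)
    qed
    have "norm (x - y) \<le> (\<Sum>b\<in>Basis. \<bar>(x - y) \<bullet> b\<bar>)"
      by (rule norm_le_l1)
    also have "\<dots> < (\<Sum>b\<in>(Basis::'a set). s)"
      using coordinate_small by (intro sum_strict_mono) auto
    also have "\<dots> = 1"
      using \<open>n > 0\<close> by (simp add: s_def n_def)
    finally show False
      using \<open>dist x y = 1\<close> by (simp add: dist_norm)
  qed
  moreover have "finite F" and "c x \<in> F" for x
    using \<open>N > 0\<close> by (auto simp: F_def c_def finite_PiE)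
  ultimately have "colorable S (\<lambda>x y. dist x y = 1) (card F)"
    by (intro colorable_cardI[where c = c]) auto
  moreover have "card F = (DIM('a) + 1) ^ DIM('a)"
    by (simp add: F_def card_PiE N_def n_def nat_add_distrib)
  ultimately show ?thesis
    by simp
qed

theorem proposition3p13:
  fixes k :: nat
  assumes "k \<ge> 1"
  shows "valid_R1 TYPE(real^'n) (phi k) \<longleftrightarrow>
         k < chromatic_number (sphere (0::real^'n) 1) (\<lambda>x y. dist x y = 1)"
proof -
  have "colorable (sphere (0::real^'n) 1) (\<lambda>x y. dist x y = 1) ((DIM(real^'n) + 1) ^ DIM(real^'n))"
    by (rule unit_distance_colorable)
  then show ?thesis
    by (simp add: valid_phi_iff_sphere_not_colorable less_chromatic_number_iff)
qed

end
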